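(* There is a constant $C>0$ such that for every $\phi\in\mathbb{R}$ and all distinct integers $n_1,n_2$, the arcs $I_{n_1,\phi}$ and $I_{n_2,\phi}$ of $\mathbb{R}/\mathbb{Z}$ satisfy $$d(I_{n_1,\phi},I_{n_2,\phi})>C\min(|I_{n_1,\phi}|,|I_{n_2,\phi}|).$$
   Context: $\tau=\frac{1+\sqrt5}{2}$; $w(x)=\frac1\pi\left(\tan^{-1}(x+1)-\tan^{-1}(x)\right)$. For real $x$, $x\bmod\tau\in\mathbb{R}/\tau\mathbb{Z}$ and $x\bmod1\in\mathbb{R}/\mathbb{Z}$ denote images. For $n\in\mathbb{Z}$ and $\phi\in\mathbb{R}$ let $a_{n,\phi}=\sum w(k-\phi)$, the sum over all integers $k$ with $k\bmod\tau$ in the half-open arc $[0,n\bmod\tau)$ of $\mathbb{R}/\tau\mathbb{Z}$ (from $0$ to $n\bmod\tau$ in the positive direction), and let $I_{n,\phi}\subset\mathbb{R}/\mathbb{Z}$ be the open arc from $a_{n,\phi}\bmod1$ to $(a_{n,\phi}+w(n-\phi))\bmod1$, of length $|I_{n,\phi}|=w(n-\phi)$. Here $d$ denotes the distance between subsets of the circle $\mathbb{R}/\mathbb{Z}$ (infimum of arc-length distances between their points). The constant $C$ is independent of all variables. *)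

theory Defs
  imports "HOL-Analysis.Analysis"
begin

definition gold :: real where "gold = (1 + sqrt 5) / 2"

definition wfun :: "real \<Rightarrow> real" where
  "wfun x = (arctan (x + 1) - arctan x) / pi"

definition rmod :: "real \<Rightarrow> real \<Rightarrow> real" where
  "rmod x y = x - y * of_int \<lfloor>x / y\<rfloor>"

definition arcset :: "int \<Rightarrow> int set" where
  "arcset n = {k::int. rmod (of_int k) gold < rmod (of_int n) gold}"

definition acoef :: "int \<Rightarrow> real \<Rightarrow> real" where
  "acoef n \<phi> = (\<Sum>\<^sub>\<infinity>k\<in>arcset n. wfun (of_int k - \<phi>))"

text \<open>The open arc I_{n,phi}, represented by its set of real lifts (a subset of R,
  understood modulo 1).\<close>
definition Iarc :: "int \<Rightarrow> real \<Rightarrow> real set" where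
  "Iarc n \<phi> = {x. \<exists>m::int. acoef n \<phi> < x + of_int m \<and> x + of_int m < acoef n \<phi> + wfun (of_int n - \<phi>)}"

definition cdist :: "real \<Rightarrow> real \<Rightarrow> real" where
  "cdist x y = Inf {\<bar>x - y - of_int m\<bar> | m::int. True}"

definition csetdist :: "real set \<Rightarrow> real set \<Rightarrow> real" where
  "csetdist A B = Inf {cdist x y | x y. x \<in> A \<and> y \<in> B}"

end

theory Submission
  imports Defs "HOL-Number_Theory.Fib"
begin

text \<open>
  The arcs \<open>I\<^sub>k\<close> are disjoint, have total length at most 1, and are laid out along
  \<open>\<real>/\<int>\<close> in the cyclic order of the points \<open>k mod \<tau>\<close> on \<open>\<real>/\<tau>\<int>\<close>. Hence each of the two
  gaps between \<open>I\<^sub>n\<^sub>1\<close> and \<open>I\<^sub>n\<^sub>2\<close> contains an arc \<open>I\<^sub>k\<close> as soon as some \<open>k mod \<tau>\<close> lies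
  strictly between, resp. strictly outside, \<open>n\<^sub>1 mod \<tau>\<close> and \<open>n\<^sub>2 mod \<tau>\<close>.
  Since \<open>\<tau>\<close> is badly approximable, \<open>\<bar>d - r\<tau>\<bar> \<ge> 1/(4\<bar>d\<bar>)\<close>, both arcs of \<open>\<real>/\<tau>\<int>\<close> between
  \<open>n\<^sub>1 mod \<tau>\<close> and \<open>n\<^sub>2 mod \<tau>\<close> have length at least \<open>\<delta> = 1/(4\<bar>n\<^sub>2 - n\<^sub>1\<bar>)\<close>;
  a Fibonacci approximation \<open>0 < q - r\<tau> < \<delta>\<close> with \<open>\<bar>q\<bar> \<le> 12\<bar>n\<^sub>2 - n\<^sub>1\<bar>\<close> then puts
  \<open>k = n\<^sub>1 + q\<close> between and \<open>k = n\<^sub>1 - q\<close> outside. Finally \<open>w(x)\<close> is within a factor 3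
  of \<open>1/(\<pi>(1 + x\<^sup>2))\<close> and \<open>\<bar>k - \<phi>\<bar> \<le> 25 max(\<bar>n\<^sub>1 - \<phi>\<bar>, \<bar>n\<^sub>2 - \<phi>\<bar>)\<close>, so both gaps
  have length at least \<open>min(w(n\<^sub>1 - \<phi>), w(n\<^sub>2 - \<phi>))/5625\<close>.
\<close>

lemma gold_sq: "gold^2 = gold + 1"
  unfolding gold_def by (simp add: power2_eq_square algebra_simps)

lemma gold_bounds: "1.6 < gold" "gold < 1.7"
proof -
  have "2.2 < sqrt 5" by (rule real_less_rsqrt) (simp add: power2_eq_square)
  moreover have "sqrt 5 < 2.4" by (rule real_less_lsqrt) (auto simp add: power2_eq_square)
  ultimately show "1.6 < gold" "gold < 1.7" unfolding gold_def by auto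
qed

lemma gold_pos: "0 < gold"
  using gold_bounds by simp

lemma golden_norm_eq_0D: "(x::int)^2 - x*y - y^2 = 0 \<Longrightarrow> x = 0"
proof (induction "nat \<bar>x\<bar>" arbitrary: x y rule: less_induct)
  case less
  show ?case
  proof (rule ccontr)
    assume "x \<noteq> 0"
    have "even x \<and> even y"
    proof (rule ccontr)
      assume "\<not> (even x \<and> even y)"
      then have "odd (x^2 - x*y - y^2)" by (cases "even x"; cases "even y") auto
      with less.prems show False by simp
    qed
    then obtain a b where ab: "x = 2*a" "y = 2*b" by (meson evenE)
    with less.prems have "a^2 - a*b - b^2 = 0" by (simp add: power2_eq_square algebra_simps)
    moreover have "nat \<bar>a\<bar> < nat \<bar>x\<bar>" using \<open>x \<noteq> 0\<close> ab by auto
    ultimately have "a = 0" using less.hyps by blast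
    with ab \<open>x \<noteq> 0\<close> show False by simp
  qed
qed

lemma gold_badly_approximable:
  fixes d r :: int
  assumes "d \<noteq> 0"
  shows "1 / (4 * \<bar>of_int d\<bar>) \<le> \<bar>of_int d - of_int r * gold\<bar>"
proof -
  define x where "x = of_int d - of_int r * gold"
  define y where "y = of_int d + of_int r * (gold - 1)"
  \<comment> \<open>\<open>y\<close> is the Galois conjugate of \<open>x\<close>, so \<open>x * y\<close> is the norm of \<open>x\<close> in \<open>\<int>[gold]\<close>.\<close>
  have "x * y = of_int d ^ 2 - of_int d * of_int r - of_int r ^ 2 - of_int r ^ 2 * (gold^2 - gold - 1)"
    unfolding x_def y_def power2_eq_square by algebra
  then have norm: "x * y = of_int (d^2 - d*r - r^2)"
    using gold_sq by simp
  have "d^2 - d*r - r^2 \<noteq> 0"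
    using golden_norm_eq_0D assms by blast
  then have xy: "1 \<le> \<bar>x\<bar> * \<bar>y\<bar>"
    unfolding abs_mult[symmetric] norm by linarith
  have d1: "1 \<le> \<bar>real_of_int d\<bar>"
    using assms by linarith
  show ?thesis
  proof (cases "1/4 \<le> \<bar>x\<bar>")
    case True
    have "1 / (4 * \<bar>of_int d\<bar>) \<le> (1/4::real)"
      using d1 by (simp add: divide_simps)
    with True show ?thesis unfolding x_def by linarith
  next
    case False
    have c: "0 \<le> (gold - 1) / gold" "(gold - 1) / gold \<le> 1"
      using gold_bounds by auto
    have "of_int r = (of_int d - x) / gold"
      using gold_pos unfolding x_def by (simp add: field_simps)
    then have "y = of_int d + (of_int d - x) * ((gold - 1) / gold)"
      unfolding y_def by simp
    moreover have "\<bar>(of_int d - x) * ((gold - 1) / gold)\<bar> \<le> \<bar>of_int d - x\<bar>"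
      using c by (metis abs_ge_zero abs_mult abs_of_nonneg mult_left_le)
    ultimately have "\<bar>y\<bar> \<le> 4 * \<bar>of_int d\<bar>"
      using False d1 by linarith
    then have "1 \<le> \<bar>x\<bar> * (4 * \<bar>of_int d\<bar>)"
      using xy by (smt (verit) abs_ge_zero mult_left_mono)
    then show ?thesis
      unfolding x_def[symmetric] using d1 by (simp add: divide_simps mult.commute)
  qed
qed

lemma golden_power_SucSuc:
  fixes x :: "'a::comm_ring_1"
  assumes "x^2 = x + 1"
  shows "x ^ Suc (Suc n) = x ^ Suc n + x ^ n"
proof -
  have "x ^ Suc (Suc n) = x^n * x^2" by (simp add: power2_eq_square algebra_simps)
  with assms show ?thesis by (simp add: algebra_simps)
qed

lemma fib_gold_error: "real (fib (Suc m)) - real (fib m) * gold = (1 - gold)^m"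
proof (induction m rule: fib.induct)
  case (3 n)
  have "(1 - gold) ^ Suc (Suc n) = (1 - gold) ^ Suc n + (1 - gold) ^ n"
    by (rule golden_power_SucSuc) (use gold_sq in \<open>simp add: power2_eq_square algebra_simps\<close>)
  moreover have "real (fib (Suc (Suc n))) * gold = real (fib (Suc n)) * gold + real (fib n) * gold"
    by (simp add: distrib_right)
  moreover have "real (fib (Suc (Suc (Suc n)))) = real (fib (Suc (Suc n))) + real (fib (Suc n))"
    by simp
  ultimately show ?case
    using 3 by linarith
qed simp_all

lemma fib_le_gold_power: "real (fib m) \<le> gold^m"
proof (induction m rule: fib.induct)
  case (3 n)
  have "gold ^ Suc (Suc n) = gold ^ Suc n + gold ^ n"
    by (rule golden_power_SucSuc[OF gold_sq])
  with 3 show ?case by simp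
qed (use gold_bounds in simp_all)

lemma gold_approximation:
  fixes \<epsilon> :: real
  assumes "0 < \<epsilon>" "\<epsilon> \<le> 1"
  obtains q r :: int where "0 < of_int q - of_int r * gold" "of_int q - of_int r * gold < \<epsilon>"
    "\<bar>of_int q\<bar> \<le> 3 / \<epsilon>"
proof -
  define a where "a = gold - 1"
  have a: "0 < a" "a < 1" "a * gold = 1"
    using gold_bounds gold_sq unfolding a_def by (auto simp: power2_eq_square algebra_simps)
  have ex: "\<exists>m. a^m < \<epsilon>"
    using real_arch_pow_inv[OF assms(1) a(2)] .
  define m where "m = (LEAST m. a^m < \<epsilon>)"
  have am: "a^m < \<epsilon>"
    unfolding m_def by (rule LeastI_ex[OF ex])
  then obtain k where mk: "m = Suc k"
    using assms(2) by (cases m) auto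
  have "\<epsilon> \<le> a^k"
    using not_less_Least[of k "\<lambda>m. a^m < \<epsilon>"] mk unfolding m_def by auto
  moreover have "gold^k = 1 / a^k"
    using a by (simp add: field_simps power_mult_distrib[symmetric] mult.commute)
  ultimately have gk: "gold^k \<le> 1 / \<epsilon>"
    using assms(1) a by (simp add: divide_left_mono)
  have "real (fib (Suc m)) \<le> gold^2 * gold^k"
    using fib_le_gold_power[of "Suc m"] mk by (simp add: power2_eq_square)
  also have "\<dots> \<le> 3 * (1 / \<epsilon>)"
    using gk gold_sq gold_bounds by (intro mult_mono) auto
  finally have qb: "real (fib (Suc m)) \<le> 3 / \<epsilon>"
    by simp
  define e where "e = (1 - gold)^m"
  have e: "e \<noteq> 0" "\<bar>e\<bar> < \<epsilon>"
    using am a unfolding e_def a_def by (simp_all add: power_abs abs_minus_commute)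
  define \<sigma> :: int where "\<sigma> = (if 0 < e then 1 else -1)"
  have "of_int (\<sigma> * int (fib (Suc m))) - of_int (\<sigma> * int (fib m)) * gold = \<bar>e\<bar>"
    using fib_gold_error[of m] e(1) unfolding e_def \<sigma>_def by (auto simp: algebra_simps)
  moreover have "\<bar>of_int (\<sigma> * int (fib (Suc m)))\<bar> = real (fib (Suc m))"
    unfolding \<sigma>_def by simp
  ultimately show ?thesis
    using that e qb by (metis zero_less_abs_iff)
qed

lemma rmod_bounds:
  assumes "0 < y"
  shows "0 \<le> rmod x y" "rmod x y < y"
proof -
  have "rmod x y = y * frac (x / y)"
    using assms unfolding rmod_def frac_def by (simp add: algebra_simps)
  then show "0 \<le> rmod x y" "rmod x y < y"
    using assms frac_lt_1[of "x / y"] by simp_all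
qed

lemma rmod_eqI:
  assumes "0 < y" "0 \<le> z" "z < y" "x = z + y * of_int j"
  shows "rmod x y = z"
proof -
  have "x / y = of_int j + z / y"
    using assms(1,4) by (simp add: field_simps)
  moreover have "0 \<le> z / y" "z / y < 1"
    using assms(1-3) by simp_all
  ultimately have "\<lfloor>x / y\<rfloor> = j"
    by (intro floor_unique) linarith+
  then show ?thesis
    using assms(4) unfolding rmod_def by simp
qed

definition gpos :: "int \<Rightarrow> real" where
  "gpos k = rmod (of_int k) gold"

lemma gpos_bounds: "0 \<le> gpos k" "gpos k < gold"
  unfolding gpos_def using rmod_bounds gold_pos by auto

lemma gpos_diff: "\<exists>j::int. gpos n - gpos k = of_int (n - k) - of_int j * gold"
  unfolding gpos_def rmod_def by (auto simp: algebra_simps intro!: exI[of _ "\<lfloor>of_int n / gold\<rfloor> - \<lfloor>of_int k / gold\<rfloor>"])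

lemma gpos_separated:
  assumes "n \<noteq> k"
  shows "1 / (4 * \<bar>of_int (n - k)\<bar>) \<le> \<bar>gpos n - gpos k - of_int i * gold\<bar>"
proof -
  obtain j where "gpos n - gpos k = of_int (n - k) - of_int j * gold"
    using gpos_diff by blast
  then have "gpos n - gpos k - of_int i * gold = of_int (n - k) - of_int (j + i) * gold"
    by (simp add: algebra_simps)
  then show ?thesis
    using gold_badly_approximable[of "n - k" "j + i"] assms by simp
qed

lemma gpos_inj: "gpos n = gpos k \<Longrightarrow> n = k"
  using gpos_separated[of n k 0] by (cases "n = k") (auto simp: divide_simps)

lemma gpos_trichotomy: "gpos k < gpos n \<or> k = n \<or> gpos n < gpos k"
  using gpos_inj[of k n] by linarith

lemma gpos_add:
  assumes "0 \<le> gpos n + (of_int q - of_int r * gold)" "gpos n + (of_int q - of_int r * gold) < gold"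
  shows "gpos (n + q) = gpos n + (of_int q - of_int r * gold)"
  unfolding gpos_def
proof (rule rmod_eqI[OF gold_pos _ _ _, where j = "\<lfloor>of_int n / gold\<rfloor> + r"])
  show "of_int (n + q) = rmod (of_int n) gold + (of_int q - of_int r * gold) + gold * of_int (\<lfloor>of_int n / gold\<rfloor> + r)"
    unfolding rmod_def by (simp add: algebra_simps)
qed (use assms in \<open>simp_all add: gpos_def\<close>)

lemma gpos_between_and_outside:
  assumes "gpos n1 < gpos n2"
  obtains q where "\<bar>q\<bar> \<le> 12 * \<bar>n2 - n1\<bar>"
    "gpos n1 < gpos (n1 + q)" "gpos (n1 + q) < gpos n2"
    "gpos (n1 - q) < gpos n1 \<or> gpos n2 < gpos (n1 - q)"
proof -
  define \<delta> :: real where "\<delta> = 1 / (4 * \<bar>of_int (n2 - n1)\<bar>)"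
  have "n2 \<noteq> n1"
    using assms by auto
  then have d1: "1 \<le> \<bar>real_of_int (n2 - n1)\<bar>"
    by linarith
  then have \<delta>: "0 < \<delta>" "\<delta> \<le> 1/4"
    unfolding \<delta>_def by (simp_all add: divide_simps)
  have inner: "\<delta> \<le> gpos n2 - gpos n1" and outer: "\<delta> \<le> gold - (gpos n2 - gpos n1)"
    using gpos_separated[OF \<open>n2 \<noteq> n1\<close>, of 0] gpos_separated[OF \<open>n2 \<noteq> n1\<close>, of 1]
      assms gpos_bounds[of n1] gpos_bounds[of n2] unfolding \<delta>_def by auto
  obtain q r :: int where step: "0 < of_int q - of_int r * gold" "of_int q - of_int r * gold < \<delta>"
    and q: "\<bar>of_int q\<bar> \<le> 3 / \<delta>"
    using gold_approximation[of \<delta>] \<delta> by auto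
  define s where "s = of_int q - of_int r * gold"
  have "\<bar>real_of_int q\<bar> \<le> 12 * \<bar>real_of_int (n2 - n1)\<bar>"
    using q unfolding \<delta>_def by simp
  then have "\<bar>q\<bar> \<le> 12 * \<bar>n2 - n1\<bar>"
    by linarith
  moreover have "gpos (n1 + q) = gpos n1 + s"
    using gpos_add[of n1 q r] step inner gpos_bounds[of n1] gpos_bounds[of n2] unfolding s_def by auto
  moreover have "gpos (n1 - q) < gpos n1 \<or> gpos n2 < gpos (n1 - q)"
  proof (cases "0 \<le> gpos n1 - s")
    case True
    then have "gpos (n1 + - q) = gpos n1 - s"
      using gpos_add[of n1 "- q" "- r"] step gpos_bounds[of n1] unfolding s_def by auto
    then show ?thesis
      using step unfolding s_def by simp
  next
    case False
    then have "gpos (n1 + - q) = gpos n1 - s + gold"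
      using gpos_add[of n1 "- q" "- r - 1"] False step \<delta> gold_bounds gpos_bounds[of n1]
      unfolding s_def by (auto simp: algebra_simps)
    then show ?thesis
      using step outer unfolding s_def by simp
  qed
  ultimately show ?thesis
    using that step inner unfolding s_def by auto
qed

lemma wfun_mvt: "\<exists>\<xi>. x < \<xi> \<and> \<xi> < x + 1 \<and> wfun x = 1 / (pi * (1 + \<xi>^2))"
proof -
  obtain \<xi> where "x < \<xi>" "\<xi> < x + 1" "arctan (x + 1) - arctan x = (x + 1 - x) * inverse (1 + \<xi>^2)"
    using MVT2[of x "x + 1" arctan "\<lambda>t. inverse (1 + t^2)"] by (auto intro: DERIV_arctan)
  then show ?thesis
    unfolding wfun_def by (auto simp: divide_simps)
qed

lemma wfun_pos: "0 < wfun x"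
  using wfun_mvt[of x] by (auto simp: add_pos_nonneg)

lemma one_add_square_le_three_times:
  fixes x z :: real
  assumes "\<bar>x - z\<bar> \<le> 1"
  shows "1 + x^2 \<le> 3 * (1 + z^2)"
proof -
  define t where "t = x - z"
  have "t^2 \<le> 1"
    using assms unfolding t_def by (simp add: abs_square_le_1)
  moreover have "3 * (1 + z^2) - (1 + x^2) = 2 * (1 - t^2) + z^2 + (z - t)^2"
    unfolding t_def by (simp add: power2_eq_square algebra_simps)
  ultimately show ?thesis
    by (smt (verit) zero_le_power2)
qed

lemma wfun_bounds: "1 / (3 * pi * (1 + x^2)) \<le> wfun x" "wfun x \<le> 3 / (pi * (1 + x^2))"
proof -
  obtain \<xi> where \<xi>: "x < \<xi>" "\<xi> < x + 1" and w: "wfun x = 1 / (pi * (1 + \<xi>^2))"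
    using wfun_mvt by blast
  have "1 + \<xi>^2 \<le> 3 * (1 + x^2)" "1 + x^2 \<le> 3 * (1 + \<xi>^2)"
    using \<xi> by (intro one_add_square_le_three_times; simp)+
  then show "1 / (3 * pi * (1 + x^2)) \<le> wfun x" "wfun x \<le> 3 / (pi * (1 + x^2))"
    unfolding w by (simp_all add: divide_simps add_pos_nonneg)
qed

lemma wfun_comparable:
  assumes "1 \<le> c" "\<bar>x\<bar> \<le> c * \<bar>y\<bar>"
  shows "wfun y \<le> 9 * c^2 * wfun x"
proof -
  have "x^2 \<le> c^2 * y^2"
    using power_mono[OF assms(2), of 2] by (simp add: power_mult_distrib)
  moreover have "1 \<le> c^2"
    using assms(1) by (simp add: one_le_power)
  ultimately have "1 + x^2 \<le> c^2 * (1 + y^2)"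
    by (simp add: algebra_simps)
  then have "3 / (pi * (1 + y^2)) \<le> 9 * c^2 * (1 / (3 * pi * (1 + x^2)))"
    by (simp add: divide_simps add_pos_nonneg mult.commute mult.left_commute)
  also have "\<dots> \<le> 9 * c^2 * wfun x"
    using wfun_bounds(1)[of x] by (intro mult_left_mono) auto
  finally show ?thesis
    using wfun_bounds(2)[of y] by linarith
qed

lemma sum_wfun_symmetric_interval:
  "(\<Sum>k\<in>{- int N..int N}. wfun (of_int k - \<phi>)) = (arctan (of_nat N + 1 - \<phi>) - arctan (- of_nat N - \<phi>)) / pi"
proof (induction N)
  case (Suc N)
  have "{- int (Suc N)..int (Suc N)} = insert (- int (Suc N)) (insert (int (Suc N)) {- int N..int N})"
    by auto
  with Suc show ?case
    by (simp add: wfun_def algebra_simps diff_divide_distrib add_divide_distrib)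
qed (simp add: wfun_def)

lemma sum_wfun_le_1:
  assumes "finite F"
  shows "(\<Sum>k\<in>F. wfun (of_int k - \<phi>)) \<le> 1"
proof -
  obtain b where "abs ` F \<subseteq> {..b}"
    using assms finite_int_iff_bounded_le by blast
  then have "F \<subseteq> {- int (nat b)..int (nat b)}"
    by force
  then have "(\<Sum>k\<in>F. wfun (of_int k - \<phi>)) \<le> (\<Sum>k\<in>{- int (nat b)..int (nat b)}. wfun (of_int k - \<phi>))"
    using wfun_pos by (intro sum_mono2) (auto intro: less_imp_le)
  also have "\<dots> \<le> 1"
    unfolding sum_wfun_symmetric_interval
    using arctan_bounded[of "of_nat (nat b) + 1 - \<phi>"] arctan_bounded[of "- of_nat (nat b) - \<phi>"]
    by (simp add: divide_simps)
  finally show ?thesis .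
qed

lemma wfun_summable_on: "(\<lambda>k. wfun (of_int k - \<phi>)) summable_on A"
proof -
  have "(\<lambda>k. wfun (of_int k - \<phi>)) summable_on UNIV"
    using sum_wfun_le_1 wfun_pos
    by (intro nonneg_bdd_above_summable_on bdd_aboveI[of _ 1]) (auto intro: less_imp_le)
  then show ?thesis
    by (rule summable_on_subset_banach) simp
qed

abbreviation wmass :: "real \<Rightarrow> int set \<Rightarrow> real" where
  "wmass \<phi> A \<equiv> \<Sum>\<^sub>\<infinity>k\<in>A. wfun (of_int k - \<phi>)"

lemma wmass_le_1: "wmass \<phi> A \<le> 1"
  by (rule infsum_le_finite_sums[OF wfun_summable_on]) (rule sum_wfun_le_1)

lemma wmass_nonneg: "0 \<le> wmass \<phi> A"
  by (rule infsum_nonneg) (auto intro: less_imp_le wfun_pos)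

lemma wmass_ge_member: "k \<in> A \<Longrightarrow> wfun (of_int k - \<phi>) \<le> wmass \<phi> A"
  using infsum_mono2[OF wfun_summable_on wfun_summable_on, of "{k}" A \<phi>] wfun_pos
  by (auto intro: less_imp_le)

lemma wmass_Un: "A \<inter> B = {} \<Longrightarrow> wmass \<phi> (A \<union> B) = wmass \<phi> A + wmass \<phi> B"
  by (rule infsum_Un_disjoint) (auto intro: wfun_summable_on)

lemma wmass_insert: "n \<notin> A \<Longrightarrow> wmass \<phi> (insert n A) = wfun (of_int n - \<phi>) + wmass \<phi> A"
  using wmass_Un[of "{n}" A \<phi>] by simp

lemma arcset_eq: "arcset n = {k. gpos k < gpos n}"
  unfolding arcset_def gpos_def ..

lemma acoef_split:
  assumes "gpos n1 < gpos n2"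
  shows "acoef n2 \<phi> = acoef n1 \<phi> + wfun (of_int n1 - \<phi>) + wmass \<phi> {k. gpos n1 < gpos k \<and> gpos k < gpos n2}"
proof -
  have split: "arcset n2 = arcset n1 \<union> insert n1 {k. gpos n1 < gpos k \<and> gpos k < gpos n2}"
    using assms gpos_trichotomy[of _ n1] unfolding arcset_eq by auto
  then show ?thesis
    unfolding acoef_def split by (subst wmass_Un) (auto simp: wmass_insert arcset_eq)
qed

lemma acoef_tail_le_1: "acoef n \<phi> + wfun (of_int n - \<phi>) + wmass \<phi> {k. gpos n < gpos k} \<le> 1"
proof -
  have split: "UNIV = arcset n \<union> insert n {k. gpos n < gpos k}"
    using gpos_trichotomy[of _ n] unfolding arcset_eq by auto
  then have "wmass \<phi> UNIV = acoef n \<phi> + wfun (of_int n - \<phi>) + wmass \<phi> {k. gpos n < gpos k}"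
    unfolding acoef_def by (subst split, subst wmass_Un) (auto simp: wmass_insert arcset_eq)
  then show ?thesis
    using wmass_le_1[of \<phi> UNIV] by simp
qed

definition circle_arc :: "real \<Rightarrow> real \<Rightarrow> real set" where
  "circle_arc a l = {x. \<exists>m::int. a < x + of_int m \<and> x + of_int m < a + l}"

lemma Iarc_eq_circle_arc: "Iarc n \<phi> = circle_arc (acoef n \<phi>) (wfun (of_int n - \<phi>))"
  unfolding Iarc_def circle_arc_def ..

lemma cdist_sym: "cdist x y = cdist y x"
proof -
  have flip: "{\<bar>a - b - of_int m\<bar> | m::int. True} \<subseteq> {\<bar>b - a - of_int m\<bar> | m::int. True}" for a b :: real
  proof
    fix z
    assume "z \<in> {\<bar>a - b - of_int m\<bar> | m::int. True}"
    then obtain m :: int where "z = \<bar>a - b - of_int m\<bar>"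
      by blast
    then have "z = \<bar>b - a - of_int (- m)\<bar>"
      by simp
    then show "z \<in> {\<bar>b - a - of_int m\<bar> | m::int. True}"
      by blast
  qed
  show ?thesis
    unfolding cdist_def using flip[of x y] flip[of y x] by (simp add: subset_antisym)
qed

lemma csetdist_sym: "csetdist A B = csetdist B A"
  unfolding csetdist_def using cdist_sym by metis

lemma cdist_geI: "(\<And>m::int. c \<le> \<bar>x - y - of_int m\<bar>) \<Longrightarrow> c \<le> cdist x y"
  unfolding cdist_def by (rule cInf_greatest) auto

lemma csetdist_geI:
  assumes "x0 \<in> A" "y0 \<in> B" "\<And>x y. x \<in> A \<Longrightarrow> y \<in> B \<Longrightarrow> c \<le> cdist x y"
  shows "c \<le> csetdist A B"
  unfolding csetdist_def using assms by (intro cInf_greatest) auto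

lemma circle_arc_midpoint: "0 < l \<Longrightarrow> a + l / 2 \<in> circle_arc a l"
  unfolding circle_arc_def by (auto intro: exI[of _ 0])

lemma csetdist_circle_arcs_ge:
  assumes "0 < l1" "0 < l2" "a1 + l1 + g1 \<le> a2" "a2 + l2 + g2 \<le> a1 + 1"
  shows "min g1 g2 \<le> csetdist (circle_arc a1 l1) (circle_arc a2 l2)"
proof (rule csetdist_geI[OF circle_arc_midpoint circle_arc_midpoint])
  fix x y
  assume "x \<in> circle_arc a1 l1" "y \<in> circle_arc a2 l2"
  then obtain m1 m2 :: int where
    m1: "a1 < x + of_int m1" "x + of_int m1 < a1 + l1" and
    m2: "a2 < y + of_int m2" "y + of_int m2 < a2 + l2"
    unfolding circle_arc_def by blast
  show "min g1 g2 \<le> cdist x y"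
  proof (rule cdist_geI)
    fix m :: int
    show "min g1 g2 \<le> \<bar>x - y - of_int m\<bar>"
    proof (cases "0 \<le> m + m1 - m2")
      case True
      then have "0 \<le> real_of_int (m + m1 - m2)"
        by linarith
      then show ?thesis
        using m1 m2 assms(3) by linarith
    next
      case False
      then have "real_of_int (m + m1 - m2) \<le> -1"
        by linarith
      then show ?thesis
        using m1 m2 assms(4) by linarith
    qed
  qed
qed (use assms in auto)

lemma wfun_near_pair:
  fixes n1 n2 k :: int
  assumes "\<bar>k - n1\<bar> \<le> 12 * \<bar>n2 - n1\<bar>"
  shows "min (wfun (of_int n1 - \<phi>)) (wfun (of_int n2 - \<phi>)) \<le> 5625 * wfun (of_int k - \<phi>)"
proof -
  obtain n where n: "n \<in> {n1, n2}" "\<bar>of_int n1 - \<phi>\<bar> \<le> \<bar>of_int n - \<phi>\<bar>" "\<bar>of_int n2 - \<phi>\<bar> \<le> \<bar>of_int n - \<phi>\<bar>"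
    by (cases "\<bar>of_int n1 - \<phi>\<bar> \<le> \<bar>of_int n2 - \<phi>\<bar>") auto
  have "real_of_int \<bar>k - n1\<bar> \<le> real_of_int (12 * \<bar>n2 - n1\<bar>)"
    using assms by (simp only: of_int_le_iff)
  then have "\<bar>of_int k - \<phi>\<bar> \<le> 25 * \<bar>of_int n - \<phi>\<bar>"
    using n by simp (smt (verit))
  then have "wfun (of_int n - \<phi>) \<le> 9 * 25^2 * wfun (of_int k - \<phi>)"
    by (intro wfun_comparable) auto
  then show ?thesis
    using n(1) by auto
qed

lemma csetdist_Iarc_ge_ordered:
  assumes "gpos n1 < gpos n2"
  shows "min (wfun (of_int n1 - \<phi>)) (wfun (of_int n2 - \<phi>)) / 5625 \<le> csetdist (Iarc n1 \<phi>) (Iarc n2 \<phi>)"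
proof -
  define \<mu> where "\<mu> = min (wfun (of_int n1 - \<phi>)) (wfun (of_int n2 - \<phi>)) / 5625"
  obtain q where q: "\<bar>q\<bar> \<le> 12 * \<bar>n2 - n1\<bar>" "gpos n1 < gpos (n1 + q)" "gpos (n1 + q) < gpos n2"
    "gpos (n1 - q) < gpos n1 \<or> gpos n2 < gpos (n1 - q)"
    using gpos_between_and_outside[OF assms] by blast
  have near: "\<mu> \<le> wfun (of_int k - \<phi>)" if "k \<in> {n1 + q, n1 - q}" for k
    using wfun_near_pair[of k n1 n2 \<phi>] that q(1) unfolding \<mu>_def by auto
  have inner_gap: "\<mu> \<le> wmass \<phi> {k. gpos n1 < gpos k \<and> gpos k < gpos n2}"
    using near[of "n1 + q"] wmass_ge_member[of "n1 + q" "{k. gpos n1 < gpos k \<and> gpos k < gpos n2}" \<phi>] q(2,3)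
    by simp
  have outer_gap: "\<mu> \<le> acoef n1 \<phi> + wmass \<phi> {k. gpos n2 < gpos k}"
    using q(4)
  proof
    assume "gpos (n1 - q) < gpos n1"
    then have "wfun (of_int (n1 - q) - \<phi>) \<le> acoef n1 \<phi>"
      unfolding acoef_def arcset_eq by (intro wmass_ge_member) simp
    then show ?thesis
      using near[of "n1 - q"] wmass_nonneg[of \<phi> "{k. gpos n2 < gpos k}"] by simp
  next
    assume "gpos n2 < gpos (n1 - q)"
    then have "wfun (of_int (n1 - q) - \<phi>) \<le> wmass \<phi> {k. gpos n2 < gpos k}"
      by (intro wmass_ge_member) simp
    then show ?thesis
      using near[of "n1 - q"] wmass_nonneg[of \<phi> "arcset n1"] unfolding acoef_def by simp
  qed
  have "min (wmass \<phi> {k. gpos n1 < gpos k \<and> gpos k < gpos n2}) (acoef n1 \<phi> + wmass \<phi> {k. gpos n2 < gpos k})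
      \<le> csetdist (Iarc n1 \<phi>) (Iarc n2 \<phi>)"
    unfolding Iarc_eq_circle_arc
    by (rule csetdist_circle_arcs_ge) (use acoef_split[OF assms, of \<phi>] acoef_tail_le_1[of n2 \<phi>] wfun_pos in auto)
  with inner_gap outer_gap show ?thesis
    unfolding \<mu>_def by linarith
qed

theorem corollary16:
  shows "\<exists>C>0. \<forall>(\<phi>::real) (n1::int) (n2::int). n1 \<noteq> n2 \<longrightarrow>
     csetdist (Iarc n1 \<phi>) (Iarc n2 \<phi>) > C * min (wfun (of_int n1 - \<phi>)) (wfun (of_int n2 - \<phi>))"
proof (intro exI[of _ "1/6000"] conjI allI impI)
  fix \<phi> :: real and n1 n2 :: int
  assume "n1 \<noteq> n2"
  let ?m = "min (wfun (of_int n1 - \<phi>)) (wfun (of_int n2 - \<phi>))"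
  have "?m / 5625 \<le> csetdist (Iarc n1 \<phi>) (Iarc n2 \<phi>)"
    using gpos_trichotomy[of n1 n2]
  proof (elim disjE)
    assume "gpos n2 < gpos n1"
    then show ?thesis
      using csetdist_Iarc_ge_ordered[of n2 n1 \<phi>] by (simp add: csetdist_sym min.commute)
  qed (use csetdist_Iarc_ge_ordered[of n1 n2 \<phi>] \<open>n1 \<noteq> n2\<close> in auto)
  moreover have "0 < ?m"
    using wfun_pos by simp
  ultimately show "1/6000 * ?m < csetdist (Iarc n1 \<phi>) (Iarc n2 \<phi>)"
    by linarith
qed simp

end
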